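(* Let $X$ be a zero-mean random vector in $\mathbb{R}^d$ such that for some $\sigma>0$, $\Pr(\|X\|\ge t)\le2\exp(-t^2/\sigma^2)$ for all $t>0$. Then for any $\delta\in(0,1)$ there exists a random vector $\bar X$ such that: (i) $\mathbb{E}[\bar X]=0$; (ii) $\Pr(\bar X=X)\ge1-\delta$; (iii) $\Pr\big(\|\bar X\|<3\sigma\sqrt{\ln(4/\delta)}\big)=1$.
   Context: $\|\cdot\|$ is the Euclidean norm and $\ln$ the natural logarithm. $\bar X$ may be defined on an extension of the probability space carrying $X$. *)

theory Defs
  imports "HOL-Probability.Probability"
begin

end

theory Submission
  imports Defs
begin

(* Truncate X to the open ball of radius R = 3 sigma sqrt (ln (4 / delta)), i.e. replace X by 0
   where |X| >= R. Since E X = 0, the mean a of the truncation satisfies |a| <= E [|X|; |X| >= R],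
   and summing the sub-Gaussian tail bound over the shells [kR, (k+1)R) makes this at most
   8 R exp (- R^2 / sigma^2) < delta R / 2. To restore mean zero, toss an independent coin with
   P(heads) = q = delta / 2 and output the constant c = - (1 - q) / q * a on heads: the mean becomes
   (1 - q) a + q c = 0 and |c| < R. The result differs from X only on heads or where |X| >= R,
   an event of probability at most delta / 2 + 2 exp (- R^2 / sigma^2) <= delta. *)

definition bernoulli_measure :: "real \<Rightarrow> real measure" where
  "bernoulli_measure q = measure_pmf (map_pmf of_bool (bernoulli_pmf q))"

lemma prob_space_bernoulli_measure: "prob_space (bernoulli_measure q)"
  unfolding bernoulli_measure_def by (rule prob_space_measure_pmf)

lemma integral_bernoulli_measure:
  fixes f :: "real \<Rightarrow> 'b::{banach, second_countable_topology}"
  assumes "0 \<le> q" "q \<le> 1"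
  shows "(\<integral>u. f u \<partial>bernoulli_measure q) = q *\<^sub>R f 1 + (1 - q) *\<^sub>R f 0"
  unfolding bernoulli_measure_def using assms
  by (simp add: integral_measure_pmf[of UNIV] UNIV_bool)

lemma space_bernoulli_measure [simp]: "space (bernoulli_measure q) = UNIV"
  and sets_bernoulli_measure [simp]: "sets (bernoulli_measure q) = UNIV"
  by (simp_all add: bernoulli_measure_def)

lemma measurable_bernoulli_measure [measurable]:
  "f \<in> measurable (bernoulli_measure q) (count_space UNIV)"
  by (simp add: bernoulli_measure_def)

lemma measure_bernoulli_measure_zero:
  assumes "0 \<le> q" "q \<le> 1"
  shows "measure (bernoulli_measure q) {0} = 1 - q"
  using integral_bernoulli_measure[OF assms, of "indicator {0} :: real \<Rightarrow> real"] by simp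

definition bernoulli_mixture :: "('a \<Rightarrow> 'b) \<Rightarrow> 'b \<Rightarrow> 'a \<times> real \<Rightarrow> 'b" where
  "bernoulli_mixture Y c = (\<lambda>(\<omega>, u). if u = 1 then c else Y \<omega>)"

lemma measurable_bernoulli_mixture [measurable]:
  assumes [measurable]: "Y \<in> borel_measurable M"
  shows "bernoulli_mixture Y c \<in> borel_measurable (M \<Otimes>\<^sub>M bernoulli_measure q)"
  unfolding bernoulli_mixture_def by measurable

lemma integrable_bernoulli_mixture:
  fixes Y :: "'a \<Rightarrow> 'b::{banach, second_countable_topology}"
  assumes "prob_space M" "integrable M Y"
  shows "integrable (M \<Otimes>\<^sub>M bernoulli_measure q) (bernoulli_mixture Y c)"
proof -
  interpret Q: prob_space "bernoulli_measure q" by (rule prob_space_bernoulli_measure)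
  interpret N: prob_space "M \<Otimes>\<^sub>M bernoulli_measure q"
    by (intro prob_space_pair assms(1) prob_space_bernoulli_measure)
  have [measurable]: "Y \<in> borel_measurable M" using assms(2) by simp
  have "integrable (distr (M \<Otimes>\<^sub>M bernoulli_measure q) M fst) Y"
    using assms(2) Q.distr_pair_fst[of M] by simp
  then have "integrable (M \<Otimes>\<^sub>M bernoulli_measure q) (\<lambda>x. Y (fst x))"
    by (subst (asm) integrable_distr_eq) auto
  then have "integrable (M \<Otimes>\<^sub>M bernoulli_measure q) (\<lambda>x. norm c + norm (Y (fst x)))"
    by (intro Bochner_Integration.integrable_add N.integrable_const integrable_norm)
  then show ?thesis
    by (rule Bochner_Integration.integrable_bound)
       (measurable, auto simp: bernoulli_mixture_def split: prod.split)
qed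

lemma integral_bernoulli_mixture:
  fixes Y :: "'a \<Rightarrow> 'b::{banach, second_countable_topology}"
  assumes "prob_space M" "integrable M Y" "0 \<le> q" "q \<le> 1"
  shows "(\<integral>x. bernoulli_mixture Y c x \<partial>(M \<Otimes>\<^sub>M bernoulli_measure q))
    = (1 - q) *\<^sub>R integral\<^sup>L M Y + q *\<^sub>R c"
proof -
  interpret M: prob_space M by fact
  interpret Q: prob_space "bernoulli_measure q" by (rule prob_space_bernoulli_measure)
  interpret pair_prob_space M "bernoulli_measure q" ..
  have "(\<integral>x. bernoulli_mixture Y c x \<partial>(M \<Otimes>\<^sub>M bernoulli_measure q))
      = (\<integral>\<omega>. (\<integral>u. (if u = 1 then c else Y \<omega>) \<partial>bernoulli_measure q) \<partial>M)"
    using integral_fst'[OF integrable_bernoulli_mixture[OF assms(1,2), where c=c]]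
    by (simp add: bernoulli_mixture_def)
  also have "\<dots> = (\<integral>\<omega>. q *\<^sub>R c + (1 - q) *\<^sub>R Y \<omega> \<partial>M)"
    using assms(3,4) by (simp add: integral_bernoulli_measure)
  also have "\<dots> = (1 - q) *\<^sub>R integral\<^sup>L M Y + q *\<^sub>R c"
    using assms(2) by (simp add: M.prob_space add.commute)
  finally show ?thesis .
qed

lemma measure_bernoulli_mixture_eq_ge:
  fixes X Y :: "'a \<Rightarrow> 'b::{banach, second_countable_topology}"
  assumes "prob_space M" "X \<in> borel_measurable M" "Y \<in> borel_measurable M" "0 \<le> q" "q \<le> 1"
  defines "N \<equiv> M \<Otimes>\<^sub>M bernoulli_measure q"
  shows "(1 - q) * measure M {\<omega> \<in> space M. Y \<omega> = X \<omega>}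
    \<le> measure N {x \<in> space N. bernoulli_mixture Y c x = X (fst x)}"
proof -
  interpret Q: prob_space "bernoulli_measure q" by (rule prob_space_bernoulli_measure)
  interpret N: prob_space N
    unfolding N_def by (intro prob_space_pair assms(1) prob_space_bernoulli_measure)
  define A where "A = {\<omega> \<in> space M. Y \<omega> = X \<omega>}"
  have A[measurable]: "A \<in> sets M" unfolding A_def using assms(2,3) by measurable
  have "measure N (A \<times> {0}) = measure M A * measure (bernoulli_measure q) {0}"
    unfolding N_def using Q.emeasure_pair_measure_Times[OF A, of "{0}"]
    by (simp add: measure_def enn2real_mult)
  then have "(1 - q) * measure M A = measure N (A \<times> {0})"
    using assms(4,5) by (simp add: measure_bernoulli_measure_zero)
  also have "\<dots> \<le> measure N {x \<in> space N. bernoulli_mixture Y c x = X (fst x)}"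
  proof (rule N.finite_measure_mono)
    show "{x \<in> space N. bernoulli_mixture Y c x = X (fst x)} \<in> sets N"
      unfolding N_def using assms(2,3) by measurable
    show "A \<times> {0} \<subseteq> {x \<in> space N. bernoulli_mixture Y c x = X (fst x)}"
      using sets.sets_into_space[OF A]
      by (auto simp: N_def A_def space_pair_measure bernoulli_mixture_def)
  qed
  finally show ?thesis unfolding A_def .
qed

lemma ennreal_tail_le_suminf_indicator:
  fixes R y :: real
  assumes "0 < R"
  shows "ennreal (indicator {R..} y * y) \<le> (\<Sum>k. ennreal (2 * R) * indicator {(real k + 1) * R..} y)"
proof (cases "R \<le> y")
  case False
  then show ?thesis by simp
next
  case True
  define n where "n = nat \<lfloor>y / R\<rfloor>"
  have "1 \<le> y / R" using True assms by simp
  then have n_floor: "real n = of_int \<lfloor>y / R\<rfloor>" and n_pos: "1 \<le> real n"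
    unfolding n_def by (simp_all add: le_floor_iff)
  have n_le: "real n * R \<le> y" and lt_n: "y < (real n + 1) * R"
    using of_int_floor_le[of "y / R"] real_of_int_floor_add_one_gt[of "y / R"] assms
    unfolding n_floor[symmetric] by (simp_all add: field_simps)
  have y_le: "y \<le> real n * (2 * R)"
  proof -
    have "R \<le> real n * R" using mult_right_mono[OF n_pos, of R] assms by simp
    then show ?thesis using lt_n by (simp add: algebra_simps)
  qed
  have multiples_le: "(real k + 1) * R \<le> y" if "k < n" for k
  proof -
    have "real k + 1 \<le> real n" using that by linarith
    then have "(real k + 1) * R \<le> real n * R" using assms by (intro mult_right_mono) auto
    then show ?thesis using n_le by linarith
  qed
  have "ennreal (indicator {R..} y * y) \<le> ennreal (real n * (2 * R))"
    using True y_le by (intro ennreal_leI) simp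
  also have "\<dots> = (\<Sum>k<n. ennreal (2 * R) * indicator {(real k + 1) * R..} y)"
    using assms multiples_le by (simp add: ennreal_of_nat_eq_real_of_nat ennreal_mult' mult.commute)
  also have "\<dots> \<le> (\<Sum>k. ennreal (2 * R) * indicator {(real k + 1) * R..} y)"
    by (rule sum_le_suminf) auto
  finally show ?thesis .
qed

lemma integral_tail_le_geometric:
  fixes Y :: "'a \<Rightarrow> real"
  assumes "finite_measure M" "Y \<in> borel_measurable M" "0 < R" "0 \<le> b" "0 \<le> r" "r < 1"
    and tail: "\<And>k. measure M {\<omega> \<in> space M. (real k + 1) * R \<le> Y \<omega>} \<le> b * r ^ k"
  shows "(\<integral>\<omega>. indicator {R..} (Y \<omega>) * Y \<omega> \<partial>M) \<le> 2 * R * b / (1 - r)"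
proof -
  interpret finite_measure M by fact
  define A where "A k = {\<omega> \<in> space M. (real k + 1) * R \<le> Y \<omega>}" for k :: nat
  have A_sets: "A k \<in> sets M" for k unfolding A_def using assms(2) by measurable
  have "(\<integral>\<^sup>+\<omega>. ennreal (indicator {R..} (Y \<omega>) * Y \<omega>) \<partial>M)
      \<le> (\<integral>\<^sup>+\<omega>. (\<Sum>k. ennreal (2 * R) * indicator (A k) \<omega>) \<partial>M)"
    using ennreal_tail_le_suminf_indicator[OF assms(3)]
    by (intro nn_integral_mono) (simp add: A_def indicator_def)
  also have "\<dots> = (\<Sum>k. ennreal (2 * R) * emeasure M (A k))"
    using A_sets by (subst nn_integral_suminf) (auto simp: nn_integral_cmult_indicator)
  also have "\<dots> \<le> (\<Sum>k. ennreal (2 * R * b * r ^ k))"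
    using tail assms(3) by (intro suminf_le)
      (auto simp: emeasure_eq_measure A_def ennreal_mult'[symmetric] mult.assoc
        intro!: mult_left_mono ennreal_leI)
  also have "\<dots> = ennreal (\<Sum>k. 2 * R * b * r ^ k)"
    using assms by (intro suminf_ennreal2) (auto intro!: summable_mult summable_geometric)
  also have "(\<Sum>k. 2 * R * b * r ^ k) = 2 * R * b / (1 - r)"
    using assms(5,6) by (simp add: suminf_mult suminf_geometric summable_geometric divide_simps)
  finally have nn_bound: "(\<integral>\<^sup>+\<omega>. ennreal (indicator {R..} (Y \<omega>) * Y \<omega>) \<partial>M) \<le> 2 * R * b / (1 - r)" .
  have "(\<integral>\<omega>. indicator {R..} (Y \<omega>) * Y \<omega> \<partial>M)
      = enn2real (\<integral>\<^sup>+\<omega>. ennreal (indicator {R..} (Y \<omega>) * Y \<omega>) \<partial>M)"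
    using assms(2,3) by (intro integral_eq_nn_integral) (auto simp: indicator_def)
  also have "\<dots> \<le> 2 * R * b / (1 - r)"
    using nn_bound assms by (intro enn2real_leI) auto
  finally show ?thesis .
qed

lemma exp_neg_square_mult_le:
  assumes "ln 2 \<le> s"
  shows "exp (- ((real k + 1)\<^sup>2 * s)) \<le> exp (- s) * (1 / 2) ^ k"
proof -
  have s_nonneg: "0 \<le> s" using assms ln_ge_zero[of 2] by linarith
  have "s + real k * ln 2 \<le> (real k + 1) * s"
    using mult_left_mono[OF assms, of "real k"] by (simp add: algebra_simps)
  also have "\<dots> \<le> (real k + 1)\<^sup>2 * s"
    using s_nonneg by (intro mult_right_mono) (auto simp: power2_eq_square)
  finally have "exp (- ((real k + 1)\<^sup>2 * s)) \<le> exp (- s - real k * ln 2)"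
    by simp
  also have "\<dots> = exp (- s) * (1 / 2) ^ k"
    by (simp add: exp_diff exp_of_nat_mult exp_minus power_divide)
  finally show ?thesis .
qed

lemma subgaussian_tail_integral_le:
  fixes Y :: "'a \<Rightarrow> real"
  assumes "finite_measure M" "Y \<in> borel_measurable M"
    and tail: "\<forall>t>0. measure M {\<omega> \<in> space M. Y \<omega> \<ge> t} \<le> 2 * exp (- (t^2) / \<sigma>^2)"
    and "0 < R" "ln 2 \<le> R\<^sup>2 / \<sigma>\<^sup>2"
  shows "(\<integral>\<omega>. indicator {R..} (Y \<omega>) * Y \<omega> \<partial>M) \<le> 8 * R * exp (- (R\<^sup>2 / \<sigma>\<^sup>2))"
proof -
  have "measure M {\<omega> \<in> space M. (real k + 1) * R \<le> Y \<omega>}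
      \<le> 2 * exp (- (R\<^sup>2 / \<sigma>\<^sup>2)) * (1 / 2) ^ k" for k :: nat
  proof -
    have "measure M {\<omega> \<in> space M. (real k + 1) * R \<le> Y \<omega>}
        \<le> 2 * exp (- ((real k + 1)\<^sup>2 * (R\<^sup>2 / \<sigma>\<^sup>2)))"
      using tail[rule_format, of "(real k + 1) * R"] assms(4) by (simp add: power_mult_distrib)
    also have "\<dots> \<le> 2 * exp (- (R\<^sup>2 / \<sigma>\<^sup>2)) * (1 / 2) ^ k"
      using exp_neg_square_mult_le[OF assms(5), of k] by simp
    finally show ?thesis .
  qed
  from integral_tail_le_geometric[OF assms(1,2,4) _ _ _ this] show ?thesis by simp
qed

lemma norm_integral_indicator_le_compl:
  fixes X :: "'a \<Rightarrow> 'b::{banach, second_countable_topology}"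
  assumes "integrable M X" "integral\<^sup>L M X = 0" "A \<in> sets M"
  shows "norm (\<integral>\<omega>. indicator A \<omega> *\<^sub>R X \<omega> \<partial>M) \<le> (\<integral>\<omega>. indicator (space M - A) \<omega> * norm (X \<omega>) \<partial>M)"
proof -
  have compl_sets: "space M - A \<in> sets M" using assms(3) by auto
  have "integral\<^sup>L M X
      = (\<integral>\<omega>. indicator A \<omega> *\<^sub>R X \<omega> + indicator (space M - A) \<omega> *\<^sub>R X \<omega> \<partial>M)"
    by (intro Bochner_Integration.integral_cong) (auto simp: indicator_def)
  also have "\<dots> = (\<integral>\<omega>. indicator A \<omega> *\<^sub>R X \<omega> \<partial>M) + (\<integral>\<omega>. indicator (space M - A) \<omega> *\<^sub>R X \<omega> \<partial>M)"
    using assms(1,3) compl_sets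
    by (intro Bochner_Integration.integral_add integrable_mult_indicator)
  finally have "(\<integral>\<omega>. indicator A \<omega> *\<^sub>R X \<omega> \<partial>M) = - (\<integral>\<omega>. indicator (space M - A) \<omega> *\<^sub>R X \<omega> \<partial>M)"
    using assms(2) by (simp add: eq_neg_iff_add_eq_0)
  then have "norm (\<integral>\<omega>. indicator A \<omega> *\<^sub>R X \<omega> \<partial>M)
      = norm (\<integral>\<omega>. indicator (space M - A) \<omega> *\<^sub>R X \<omega> \<partial>M)"
    by simp
  also have "\<dots> \<le> (\<integral>\<omega>. norm (indicator (space M - A) \<omega> *\<^sub>R X \<omega>) \<partial>M)"
    by (rule Bochner_Integration.integral_norm_bound)
  also have "\<dots> = (\<integral>\<omega>. indicator (space M - A) \<omega> * norm (X \<omega>) \<partial>M)"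
    by (simp add: indicator_def)
  finally show ?thesis .
qed

lemma exists_bounded_mean_zero_modification:
  fixes X :: "'a \<Rightarrow> 'b::{banach, second_countable_topology}"
  assumes "prob_space M" "integrable M X" "integral\<^sup>L M X = 0" "0 < q" "q \<le> 1"
    and small_tail: "(1 - q) * (\<integral>\<omega>. indicator {R..} (norm (X \<omega>)) * norm (X \<omega>) \<partial>M) < q * R"
  shows "\<exists>(N :: ('a \<times> real) measure) \<pi> Xb.
           prob_space N \<and> \<pi> \<in> measurable N M \<and> distr N M \<pi> = M \<and>
           Xb \<in> borel_measurable N \<and> integrable N Xb \<and> integral\<^sup>L N Xb = 0 \<and>
           (1 - q) * (1 - measure M {\<omega> \<in> space M. R \<le> norm (X \<omega>)})
             \<le> measure N {\<omega> \<in> space N. Xb \<omega> = X (\<pi> \<omega>)} \<and>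
           (AE \<omega> in N. norm (Xb \<omega>) < R)"
proof -
  interpret prob_space M by fact
  have [measurable]: "X \<in> borel_measurable M" using assms(2) by simp
  define S where "S = {\<omega> \<in> space M. norm (X \<omega>) < R}"
  define T where "T = (\<integral>\<omega>. indicator {R..} (norm (X \<omega>)) * norm (X \<omega>) \<partial>M)"
  define Y where "Y \<omega> = indicator S \<omega> *\<^sub>R X \<omega>" for \<omega>
  define c where "c = - ((1 - q) / q) *\<^sub>R integral\<^sup>L M Y"
  have S_sets [measurable]: "S \<in> sets M" unfolding S_def by measurable
  have S_compl: "space M - S = {\<omega> \<in> space M. R \<le> norm (X \<omega>)}" by (auto simp: S_def)
  have Y_int: "integrable M Y"
    unfolding Y_def using S_sets assms(2) by (rule integrable_mult_indicator)
  have "norm (integral\<^sup>L M Y) \<le> (\<integral>\<omega>. indicator (space M - S) \<omega> * norm (X \<omega>) \<partial>M)"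
    unfolding Y_def using assms(2,3) S_sets by (rule norm_integral_indicator_le_compl)
  also have "\<dots> = T"
    unfolding T_def S_compl by (intro Bochner_Integration.integral_cong) (auto simp: indicator_def)
  finally have mean_Y_le: "norm (integral\<^sup>L M Y) \<le> T" .
  have "0 \<le> T" unfolding T_def by (intro integral_nonneg_AE) (auto simp: indicator_def)
  then have "0 < q * R" using small_tail assms(5) unfolding T_def[symmetric]
    by (smt (verit) mult_nonneg_nonneg)
  then have "0 < R" using assms(4) by (simp add: zero_less_mult_iff)
  have c_lt: "norm c < R"
  proof -
    have "norm c = (1 - q) / q * norm (integral\<^sup>L M Y)" using assms(4,5) by (simp add: c_def)
    also have "\<dots> \<le> (1 - q) / q * T" using mean_Y_le assms(4,5) by (intro mult_left_mono) auto
    also have "\<dots> < R"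
      using small_tail assms(4) unfolding T_def[symmetric] by (simp add: field_simps)
    finally show ?thesis .
  qed
  have "norm (bernoulli_mixture Y c x) < R" for x
    using c_lt \<open>0 < R\<close>
    by (auto simp: bernoulli_mixture_def Y_def S_def indicator_def split: prod.split)
  moreover have "integral\<^sup>L (M \<Otimes>\<^sub>M bernoulli_measure q) (bernoulli_mixture Y c) = 0"
    using integral_bernoulli_mixture[OF assms(1) Y_int, of q c] assms(4,5) by (simp add: c_def)
  moreover have "(1 - q) * (1 - prob {\<omega> \<in> space M. R \<le> norm (X \<omega>)})
      \<le> measure (M \<Otimes>\<^sub>M bernoulli_measure q)
          {x \<in> space (M \<Otimes>\<^sub>M bernoulli_measure q). bernoulli_mixture Y c x = X (fst x)}"
  proof -
    have "1 - prob {\<omega> \<in> space M. R \<le> norm (X \<omega>)} = prob S"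
      using prob_compl[OF S_sets] unfolding S_compl by simp
    also have "\<dots> \<le> prob {\<omega> \<in> space M. Y \<omega> = X \<omega>}"
      by (intro finite_measure_mono) (auto simp: S_def Y_def)
    finally have "(1 - q) * (1 - prob {\<omega> \<in> space M. R \<le> norm (X \<omega>)})
        \<le> (1 - q) * prob {\<omega> \<in> space M. Y \<omega> = X \<omega>}"
      using assms(5) by (intro mult_left_mono) auto
    also have "\<dots> \<le> measure (M \<Otimes>\<^sub>M bernoulli_measure q)
          {x \<in> space (M \<Otimes>\<^sub>M bernoulli_measure q). bernoulli_mixture Y c x = X (fst x)}"
      using Y_int assms(1,2,4,5) by (intro measure_bernoulli_mixture_eq_ge) auto
    finally show ?thesis .
  qed
  ultimately show ?thesis
    using assms(1,4,5) Y_int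
    by (intro exI[of _ "M \<Otimes>\<^sub>M bernoulli_measure q"] exI[of _ fst] exI[of _ "bernoulli_mixture Y c"])
       (auto intro!: prob_space_pair prob_space_bernoulli_measure integrable_bernoulli_mixture
          prob_space.distr_pair_fst)
qed

lemma subgaussian_radius:
  fixes \<sigma> \<delta> :: real
  assumes "0 < \<sigma>" "0 < \<delta>" "\<delta> < 1"
  defines "R \<equiv> 3 * \<sigma> * sqrt (ln (4 / \<delta>))"
  shows "0 < R" and "ln 2 \<le> R\<^sup>2 / \<sigma>\<^sup>2" and "exp (- (R\<^sup>2 / \<sigma>\<^sup>2)) < \<delta> / 16"
proof -
  have ln_bound: "ln 4 \<le> ln (4 / \<delta>)" using assms(2,3) by (simp add: field_simps)
  then have L_pos: "0 < ln (4 / \<delta>)" using ln_gt_zero[of 4] by linarith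
  then show "0 < R" using assms(1) by (simp add: R_def)
  have R_sq: "R\<^sup>2 / \<sigma>\<^sup>2 = 9 * ln (4 / \<delta>)"
    using assms(1) L_pos by (simp add: R_def power_mult_distrib)
  have "ln 2 \<le> ln (4 :: real)" by simp
  then show "ln 2 \<le> R\<^sup>2 / \<sigma>\<^sup>2" using ln_bound L_pos R_sq by linarith
  have "exp (- (R\<^sup>2 / \<sigma>\<^sup>2)) \<le> exp (- (2 * ln (4 / \<delta>)))" using L_pos R_sq by simp
  also have "\<dots> = (\<delta> / 4)\<^sup>2"
    using assms(2) by (simp add: exp_minus exp_of_nat_mult[of 2, simplified] power_divide)
  also have "\<dots> < \<delta> / 16" using assms(2,3) by (simp add: power2_eq_square)
  finally show "exp (- (R\<^sup>2 / \<sigma>\<^sup>2)) < \<delta> / 16" .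
qed

theorem lemma9:
  fixes M :: "'a measure" and X :: "'a \<Rightarrow> 'd::euclidean_space"
    and \<sigma> \<delta> :: real
  assumes "prob_space M"
    and "X \<in> borel_measurable M"
    and "integrable M X"
    and "integral\<^sup>L M X = 0"
    and "\<sigma> > 0"
    and "\<forall>t>0. measure M {\<omega> \<in> space M. norm (X \<omega>) \<ge> t} \<le> 2 * exp (- (t^2) / \<sigma>^2)"
    and "0 < \<delta>" and "\<delta> < 1"
  shows "\<exists>(N :: ('a \<times> real) measure) \<pi> Xb.
           prob_space N \<and> \<pi> \<in> measurable N M \<and> distr N M \<pi> = M \<and>
           Xb \<in> borel_measurable N \<and> integrable N Xb \<and> integral\<^sup>L N Xb = (0::'d) \<and>
           measure N {\<omega> \<in> space N. Xb \<omega> = X (\<pi> \<omega>)} \<ge> 1 - \<delta> \<and>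
           (AE \<omega> in N. norm (Xb \<omega>) < 3 * \<sigma> * sqrt (ln (4 / \<delta>)))"
proof -
  define R where "R = 3 * \<sigma> * sqrt (ln (4 / \<delta>))"
  define e where "e = exp (- (R\<^sup>2 / \<sigma>\<^sup>2))"
  define p where "p = measure M {\<omega> \<in> space M. R \<le> norm (X \<omega>)}"
  define q where "q = \<delta> / 2"
  note R_pos = subgaussian_radius(1)[OF assms(5,7,8), folded R_def]
  note ln2_le = subgaussian_radius(2)[OF assms(5,7,8), folded R_def]
  have e_small: "e < \<delta> / 16" using subgaussian_radius(3)[OF assms(5,7,8)] by (simp add: e_def R_def)
  have tail_prob: "p \<le> 2 * e" using assms(6) R_pos by (simp add: p_def e_def)
  have "(\<integral>\<omega>. indicator {R..} (norm (X \<omega>)) * norm (X \<omega>) \<partial>M) \<le> 8 * R * e"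
    unfolding e_def using assms(1,2,6) R_pos ln2_le
    by (intro subgaussian_tail_integral_le) (auto simp: prob_space.finite_measure)
  then have "(1 - q) * (\<integral>\<omega>. indicator {R..} (norm (X \<omega>)) * norm (X \<omega>) \<partial>M) \<le> (1 - q) * (8 * R * e)"
    using assms(8) by (intro mult_left_mono) (auto simp: q_def)
  also have "\<dots> \<le> 8 * R * e" using R_pos assms(7) by (simp add: q_def e_def algebra_simps)
  also have "\<dots> < q * R" using e_small R_pos by (simp add: q_def)
  finally have small_tail: "(1 - q) * (\<integral>\<omega>. indicator {R..} (norm (X \<omega>)) * norm (X \<omega>) \<partial>M) < q * R" .
  have "0 \<le> q * p" using assms(7) by (simp add: q_def p_def)
  moreover have "(1 - q) * (1 - p) = 1 - q - p + q * p" by (simp add: algebra_simps)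
  ultimately have "1 - \<delta> \<le> (1 - q) * (1 - p)"
    using tail_prob e_small assms(7) unfolding q_def by linarith
  with exists_bounded_mean_zero_modification[OF assms(1,3,4) _ _ small_tail] assms(7,8)
  show ?thesis unfolding R_def q_def p_def by (fastforce intro: order_trans)
qed

end
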